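(* Let $k$ be a field, $A,B$ abelian groups, $R$ an $A$-graded and $S$ a $B$-graded finite-dimensional Frobenius $k$-algebra with forms $\langle-,-\rangle_R,\langle-,-\rangle_S$, and $t:A\otimes B\to k^\times$ a bicharacter. Suppose there exist $\sigma_R\in A$, $\sigma_S\in B$ such that for homogeneous $r,r'\in R$, $\langle r,r'\rangle_R\neq0$ implies $|r|+|r'|+\sigma_R=0$, and for homogeneous $s,s'\in S$, $\langle s,s'\rangle_S\ne0$ implies $|s|+|s'|+\sigma_S=0$. Suppose further that the Nakayama automorphisms of $R$ and $S$ are diagonalisable. Then the Nakayama automorphism of $R\otimes^tS$, with respect to the form $\langle r\otimes s,r'\otimes s'\rangle=t(|r'|,|s|)\langle r,r'\rangle_R\langle s,s'\rangle_S$, is diagonalisable.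
   Context: $R\otimes^tS$ is $R\otimes S$ with product $(r\otimes s)(r'\otimes s')=t(|r'|,|s|)rr'\otimes ss'$ for homogeneous elements; $|\cdot|$ denotes degree. The Nakayama automorphism $\nu$ of a Frobenius algebra is defined by $\langle x,y\rangle=\langle y,\nu(x)\rangle$ for all $y$. *)

theory Defs
  imports Main
begin

text \<open>A finite-dimensional graded k-algebra is represented in coordinates with respect to
a basis of homogeneous elements indexed by a finite type 'n: vectors are functions
'n \<Rightarrow> 'k, the basis vector n has degree deg n, multiplication is given by structure
constants m i j l (e_i e_j = sum_l m i j l e_l), and a bilinear form by its Gram matrix g.\<close>

definition bform :: "('n::finite \<Rightarrow> 'n \<Rightarrow> 'k::field) \<Rightarrow> ('n \<Rightarrow> 'k) \<Rightarrow> ('n \<Rightarrow> 'k) \<Rightarrow> 'k" where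
  "bform g x y = (\<Sum>i\<in>UNIV. \<Sum>j\<in>UNIV. x i * y j * g i j)"

definition amul :: "('n::finite \<Rightarrow> 'n \<Rightarrow> 'n \<Rightarrow> 'k::field) \<Rightarrow> ('n \<Rightarrow> 'k) \<Rightarrow> ('n \<Rightarrow> 'k) \<Rightarrow> ('n \<Rightarrow> 'k)" where
  "amul m x y = (\<lambda>l. \<Sum>i\<in>UNIV. \<Sum>j\<in>UNIV. x i * y j * m i j l)"

definition vscale :: "'k::field \<Rightarrow> ('n \<Rightarrow> 'k) \<Rightarrow> ('n \<Rightarrow> 'k)" where
  "vscale c x = (\<lambda>i. c * x i)"

definition frobenius_algebra ::
  "('n::finite \<Rightarrow> 'n \<Rightarrow> 'n \<Rightarrow> 'k::field) \<Rightarrow> ('n \<Rightarrow> 'k) \<Rightarrow> ('n \<Rightarrow> 'n \<Rightarrow> 'k) \<Rightarrow> bool" where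
  "frobenius_algebra m u g \<longleftrightarrow>
     (\<forall>x y z. amul m (amul m x y) z = amul m x (amul m y z)) \<and>
     (\<forall>x. amul m u x = x \<and> amul m x u = x) \<and>
     (\<forall>x y z. bform g (amul m x y) z = bform g x (amul m y z)) \<and>
     (\<forall>x. (\<forall>y. bform g x y = 0) \<longrightarrow> x = (\<lambda>_. 0)) \<and>
     (\<forall>y. (\<forall>x. bform g x y = 0) \<longrightarrow> y = (\<lambda>_. 0))"

definition graded_algebra :: "('n \<Rightarrow> 'a::ab_group_add) \<Rightarrow> ('n \<Rightarrow> 'n \<Rightarrow> 'n \<Rightarrow> 'k::field) \<Rightarrow> bool" where
  "graded_algebra deg m \<longleftrightarrow> (\<forall>i j l. m i j l \<noteq> 0 \<longrightarrow> deg l = deg i + deg j)"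

definition homogeneous :: "('n \<Rightarrow> 'a) \<Rightarrow> 'a \<Rightarrow> ('n \<Rightarrow> 'k::zero) \<Rightarrow> bool" where
  "homogeneous deg a x \<longleftrightarrow> (\<forall>i. x i \<noteq> 0 \<longrightarrow> deg i = a)"

definition bicharacter :: "('a::ab_group_add \<Rightarrow> 'b::ab_group_add \<Rightarrow> 'k::field) \<Rightarrow> bool" where
  "bicharacter t \<longleftrightarrow>
     (\<forall>a b. t a b \<noteq> 0) \<and>
     (\<forall>a a' b. t (a + a') b = t a b * t a' b) \<and>
     (\<forall>a b b'. t a (b + b') = t a b * t a b')"

definition is_nakayama :: "('n::finite \<Rightarrow> 'n \<Rightarrow> 'k::field) \<Rightarrow> (('n \<Rightarrow> 'k) \<Rightarrow> ('n \<Rightarrow> 'k)) \<Rightarrow> bool" where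
  "is_nakayama g \<nu> \<longleftrightarrow> (\<forall>x y. bform g x y = bform g y (\<nu> x))"

definition diagonalisable :: "(('n::finite \<Rightarrow> 'k::field) \<Rightarrow> ('n \<Rightarrow> 'k)) \<Rightarrow> bool" where
  "diagonalisable f \<longleftrightarrow>
     (\<forall>x y. f (\<lambda>i. x i + y i) = (\<lambda>i. f x i + f y i)) \<and> (\<forall>c x. f (vscale c x) = vscale c (f x)) \<and>
     (\<exists>(v :: 'n \<Rightarrow> ('n \<Rightarrow> 'k)) (ev :: 'n \<Rightarrow> 'k).
        (\<forall>j. f (v j) = vscale (ev j) (v j)) \<and>
        (\<forall>c. (\<forall>l. (\<Sum>j\<in>UNIV. c j * v j l) = 0) \<longrightarrow> (\<forall>j. c j = 0)))"

text \<open>Gram matrix of the form on R \<otimes>^t S w.r.t. the basis e_i \<otimes> f_j: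
 <e_i \<otimes> f_j, e_i' \<otimes> f_j'> = t(|e_i'|, |f_j|) <e_i,e_i'>_R <f_j,f_j'>_S.\<close>
definition twisted_gram ::
  "('a \<Rightarrow> 'b \<Rightarrow> 'k::field) \<Rightarrow> ('i \<Rightarrow> 'a) \<Rightarrow> ('j \<Rightarrow> 'b) \<Rightarrow> ('i \<Rightarrow> 'i \<Rightarrow> 'k) \<Rightarrow> ('j \<Rightarrow> 'j \<Rightarrow> 'k)
    \<Rightarrow> ('i \<times> 'j) \<Rightarrow> ('i \<times> 'j) \<Rightarrow> 'k" where
  "twisted_gram t degR degS gR gS p q =
     t (degR (fst q)) (degS (snd p)) * gR (fst p) (fst q) * gS (snd p) (snd q)"

text \<open>Structure constants of R \<otimes>^t S (not needed by the statement, given for completeness):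
 (e_i \<otimes> f_j)(e_i' \<otimes> f_j') = t(|e_i'|,|f_j|) e_i e_i' \<otimes> f_j f_j'.\<close>
definition twisted_mult ::
  "('a \<Rightarrow> 'b \<Rightarrow> 'k::field) \<Rightarrow> ('i \<Rightarrow> 'a) \<Rightarrow> ('j \<Rightarrow> 'b) \<Rightarrow> ('i \<Rightarrow> 'i \<Rightarrow> 'i \<Rightarrow> 'k) \<Rightarrow> ('j \<Rightarrow> 'j \<Rightarrow> 'j \<Rightarrow> 'k)
    \<Rightarrow> ('i \<times> 'j) \<Rightarrow> ('i \<times> 'j) \<Rightarrow> ('i \<times> 'j) \<Rightarrow> 'k" where
  "twisted_mult t degR degS mR mS p q r =
     t (degR (fst q)) (degS (snd p)) * mR (fst p) (fst q) (fst r) * mS (snd p) (snd q) (snd r)"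

end

theory Submission
  imports Defs "HOL-Library.Function_Algebras" HOL.Vector_Spaces
begin

(* In coordinates a Nakayama automorphism of a nondegenerate form g is a matrix map \<nu> = matrix_map N
   with <e_i, z> = <z, \<nu> e_i>; N exists because z \<mapsto> <-, z> is injective, hence bijective. If the
   form only pairs degrees adding up to -\<sigma>, then \<nu> preserves degrees. For the twisted form a direct
   computation with the bicharacter shows that
     e \<otimes> f \<mapsto> t(|e|, \<sigma>_S) t(\<sigma>_R, |f|)\<inverse> \<nu>_R(e) \<otimes> \<nu>_S(f)
   is a Nakayama automorphism of R \<otimes>^t S: the Kronecker product of \<nu>_R and \<nu>_S, each rescaled by a
   scalar depending only on the degree. Such a rescaling of a degree-preserving diagonalisable map is
   diagonalisable, since the homogeneous components of eigenvectors are again eigenvectors and still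
   span; and the Kronecker product of two diagonalisable maps is diagonalisable, with the products of
   the two eigenbases as an eigenbasis. *)

lemma sum_apply: "(sum f A) x = (\<Sum>a\<in>A. f a x)"
  by (induction A rule: infinite_finite_induct) auto

lemma sum_UNIV_prod: "(\<Sum>p\<in>UNIV. g p) = (\<Sum>a\<in>UNIV. \<Sum>b\<in>UNIV. g (a, b))"
  by (simp add: sum.cartesian_product)

lemma add3_eq_0_iff: "a + b + c = 0 \<longleftrightarrow> a = - b - c" for a b c :: "'a::ab_group_add"
  by (metis diff_eq_eq eq_neg_iff_add_eq_0 minus_diff_commute)

section \<open>Coordinate vectors\<close>

lemma vscale_apply [simp]: "vscale c x i = c * x i"
  by (simp add: vscale_def)

interpretation vec: vector_space "vscale :: 'k::field \<Rightarrow> ('n \<Rightarrow> 'k) \<Rightarrow> _"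
  by unfold_locales (auto simp: vscale_def fun_eq_iff algebra_simps)

definition unit_vec :: "'n \<Rightarrow> 'n \<Rightarrow> 'k::zero_neq_one" where
  "unit_vec i = (\<lambda>j. if j = i then 1 else 0)"

lemma inj_unit_vec: "inj (unit_vec :: 'n \<Rightarrow> 'n \<Rightarrow> 'k::zero_neq_one)"
  by (auto simp: inj_def unit_vec_def fun_eq_iff)

lemma sum_scaled_unit_vec: "(\<Sum>i\<in>UNIV. vscale (x i) (unit_vec i)) = (x :: 'n::finite \<Rightarrow> 'k::field)"
  by (simp add: fun_eq_iff sum_apply unit_vec_def if_distrib[where f="\<lambda>y. _ * y"] cong: if_cong)

lemma sum_unit_vec_mult: "(\<Sum>q\<in>UNIV. unit_vec a q * x q) = x a"
  for x :: "'n::finite \<Rightarrow> 'k::semiring_1"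
  by (simp add: unit_vec_def if_distrib[where f="\<lambda>y. y * _"] cong: if_cong)

definition independent_family :: "('m::finite \<Rightarrow> 'n \<Rightarrow> 'k::field) \<Rightarrow> bool" where
  "independent_family v \<longleftrightarrow> (\<forall>c. (\<forall>l. (\<Sum>j\<in>UNIV. c j * v j l) = 0) \<longrightarrow> (\<forall>j. c j = 0))"

lemma independent_family_unit_vec: "independent_family (unit_vec :: 'n::finite \<Rightarrow> 'n \<Rightarrow> 'k::field)"
  unfolding independent_family_def
  by (simp add: unit_vec_def if_distrib[where f="\<lambda>y. _ * y"] cong: if_cong)

lemma inj_if_independent_family:
  fixes v :: "'m::finite \<Rightarrow> 'n \<Rightarrow> 'k::field"
  assumes "independent_family v"
  shows "inj v"
proof (rule injI, rule ccontr)
  fix a b assume "v a = v b" "a \<noteq> b"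
  define c where "c j = (if j = a then 1 else 0) - (if j = b then 1 else (0::'k))" for j
  have "(\<Sum>j\<in>UNIV. c j * v j l) = 0" for l
    using \<open>v a = v b\<close> by (simp add: c_def left_diff_distrib sum_subtractf
        if_distrib[where f="\<lambda>y. y * _"] cong: if_cong)
  then have "c a = 0"
    using assms by (auto simp: independent_family_def)
  with \<open>a \<noteq> b\<close> show False
    by (simp add: c_def)
qed

lemma independent_family_iff:
  fixes v :: "'m::finite \<Rightarrow> 'n \<Rightarrow> 'k::field"
  shows "independent_family v \<longleftrightarrow> inj v \<and> vec.independent (range v)"
proof
  assume ind: "independent_family v"
  then have "inj v"
    by (rule inj_if_independent_family)
  moreover have "vec.independent (range v)"
  proof (rule vec.independent_if_scalars_zero)
    fix f x assume zero: "(\<Sum>y\<in>range v. vscale (f y) y) = 0" and "x \<in> range v"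
    have "(\<Sum>j\<in>UNIV. f (v j) * v j l) = 0" for l
      using fun_cong[OF zero, of l] by (simp add: sum_apply sum.reindex[OF \<open>inj v\<close>])
    then show "f x = 0"
      using ind[unfolded independent_family_def, rule_format, of "\<lambda>j. f (v j)"] \<open>x \<in> range v\<close>
      by blast
  qed simp
  ultimately show "inj v \<and> vec.independent (range v)" ..
next
  assume "inj v \<and> vec.independent (range v)"
  then have "inj v" and indep: "vec.independent (range v)" by auto
  show "independent_family v"
    unfolding independent_family_def
  proof (intro allI impI)
    fix c j assume zero: "\<forall>l. (\<Sum>j\<in>UNIV. c j * v j l) = 0"
    define u where "u = c \<circ> inv v"
    have "(\<Sum>y\<in>range v. vscale (u y) y) = (\<Sum>j\<in>UNIV. vscale (c j) (v j))"
      by (simp add: sum.reindex[OF \<open>inj v\<close>] u_def inv_f_f[OF \<open>inj v\<close>])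
    also have "\<dots> = 0"
      using zero by (simp add: fun_eq_iff sum_apply)
    finally have "\<forall>y\<in>range v. u y = 0"
      using indep vec.dependent_finite[of "range v"] by auto
    then show "c j = 0"
      by (simp add: u_def \<open>inj v\<close>)
  qed
qed

interpretation fin_vec: finite_dimensional_vector_space "vscale :: 'k::field \<Rightarrow> ('n::finite \<Rightarrow> 'k) \<Rightarrow> _" "range unit_vec"
proof
  show "vec.independent (range unit_vec :: ('n \<Rightarrow> 'k) set)"
    using independent_family_unit_vec independent_family_iff by blast
  show "vec.span (range unit_vec :: ('n \<Rightarrow> 'k) set) = UNIV"
  proof safe
    fix x :: "'n \<Rightarrow> 'k"
    have "(\<Sum>i\<in>UNIV. vscale (x i) (unit_vec i)) \<in> vec.span (range unit_vec)"
      by (intro vec.span_sum vec.span_scale vec.span_base) auto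
    then show "x \<in> vec.span (range unit_vec)" by (simp add: sum_scaled_unit_vec)
  qed auto
qed simp

section \<open>Diagonalisable matrix maps\<close>

definition eigenvectors :: "(('n \<Rightarrow> 'k::field) \<Rightarrow> ('n \<Rightarrow> 'k)) \<Rightarrow> ('n \<Rightarrow> 'k) set" where
  "eigenvectors f = {x. \<exists>\<mu>. f x = vscale \<mu> x}"

lemma eigenbasis_if_span_eigenvectors:
  fixes f :: "('n::finite \<Rightarrow> 'k::field) \<Rightarrow> ('n \<Rightarrow> 'k)"
  assumes span: "vec.span (eigenvectors f) = UNIV"
  obtains v :: "'n \<Rightarrow> 'n \<Rightarrow> 'k" and ev where "\<forall>j. f (v j) = vscale (ev j) (v j)"
    and "independent_family v"
proof -
  obtain B where "B \<subseteq> eigenvectors f" and indep: "vec.independent B"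
    and "eigenvectors f \<subseteq> vec.span B"
    by (rule vec.maximal_independent_subset)
  have spanB: "UNIV \<subseteq> vec.span B"
    using span vec.span_minimal[OF \<open>eigenvectors f \<subseteq> vec.span B\<close> vec.subspace_span] by simp
  have "card (UNIV :: 'n set) = card B"
    using vec.basis_card_eq_dim[OF subset_UNIV spanB indep] by (simp add: card_image inj_unit_vec)
  then have "\<exists>v. bij_betw v (UNIV :: 'n set) B"
    by (rule finite_same_card_bij[OF finite_UNIV fin_vec.finiteI_independent[OF indep]])
  then obtain v where v: "bij_betw v (UNIV :: 'n set) B" ..
  then have "\<forall>j. \<exists>\<mu>. f (v j) = vscale \<mu> (v j)"
    using \<open>B \<subseteq> eigenvectors f\<close> by (auto simp: eigenvectors_def bij_betw_def)
  then obtain ev where "\<forall>j. f (v j) = vscale (ev j) (v j)"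
    by (rule choice[THEN exE])
  moreover have "independent_family v"
    using v indep by (simp add: independent_family_iff bij_betw_def)
  ultimately show ?thesis
    by (rule that)
qed

lemma span_eigenvectors_if_eigenbasis:
  fixes v :: "'n::finite \<Rightarrow> 'n \<Rightarrow> 'k::field"
  assumes eig: "\<forall>j. f (v j) = vscale (ev j) (v j)" and "independent_family v"
  shows "vec.span (eigenvectors f) = UNIV"
proof -
  have "inj v" and indep: "vec.independent (range v)"
    using \<open>independent_family v\<close> by (auto simp: independent_family_iff)
  then have "card (range v) = vec.dim (UNIV :: ('n \<Rightarrow> 'k) set)"
    by (simp add: card_image inj_unit_vec)
  then have "UNIV \<subseteq> vec.span (range v)"
    using fin_vec.card_eq_dim[of "range v" UNIV] indep by simp
  moreover have "range v \<subseteq> eigenvectors f"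
    using eig by (auto simp: eigenvectors_def)
  ultimately show ?thesis
    using vec.span_mono[of "range v" "eigenvectors f"] by auto
qed

lemma diagonalisable_iff_span_eigenvectors:
  fixes f :: "('n::finite \<Rightarrow> 'k::field) \<Rightarrow> ('n \<Rightarrow> 'k)"
  shows "diagonalisable f \<longleftrightarrow>
    (\<forall>x y. f (\<lambda>i. x i + y i) = (\<lambda>i. f x i + f y i)) \<and> (\<forall>c x. f (vscale c x) = vscale c (f x)) \<and>
    vec.span (eigenvectors f) = UNIV"
proof -
  have "vec.span (eigenvectors f) = UNIV \<longleftrightarrow>
      (\<exists>(v :: 'n \<Rightarrow> ('n \<Rightarrow> 'k)) ev. (\<forall>j. f (v j) = vscale (ev j) (v j)) \<and> independent_family v)"
    by (metis eigenbasis_if_span_eigenvectors span_eigenvectors_if_eigenbasis)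
  then show ?thesis
    by (simp add: diagonalisable_def independent_family_def)
qed

(* Coordinate vectors are rows: matrix_map N x = x N, so row i of N is the image of the i-th basis vector. *)
definition matrix_map :: "('n \<Rightarrow> 'n \<Rightarrow> 'k::field) \<Rightarrow> ('n \<Rightarrow> 'k) \<Rightarrow> ('n \<Rightarrow> 'k)" where
  "matrix_map N x = (\<lambda>r. \<Sum>i\<in>UNIV. x i * N i r)"

lemma matrix_map_add: "matrix_map N (\<lambda>i. x i + y i) = (\<lambda>r. matrix_map N x r + matrix_map N y r)"
  by (simp add: matrix_map_def fun_eq_iff sum.distrib distrib_right)

lemma matrix_map_vscale: "matrix_map N (vscale c x) = vscale c (matrix_map N x)"
  by (simp add: matrix_map_def fun_eq_iff sum_distrib_left mult.assoc)

lemma linear_matrix_map: "Vector_Spaces.linear vscale vscale (matrix_map N)"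
  by (simp add: Vector_Spaces.linear_iff vec.vector_space_axioms plus_fun_def matrix_map_add matrix_map_vscale)

lemma matrix_map_matrix_map:
  "matrix_map B (matrix_map A x) = matrix_map (\<lambda>i. matrix_map B (A i)) (x :: 'n::finite \<Rightarrow> 'k::field)"
proof
  fix r
  have "matrix_map B (matrix_map A x) r = (\<Sum>j\<in>UNIV. \<Sum>i\<in>UNIV. x i * (A i j * B j r))"
    by (simp add: matrix_map_def sum_distrib_right mult.assoc)
  also have "\<dots> = (\<Sum>i\<in>UNIV. \<Sum>j\<in>UNIV. x i * (A i j * B j r))"
    by (rule sum.swap)
  also have "\<dots> = matrix_map (\<lambda>i. matrix_map B (A i)) x r"
    by (simp add: matrix_map_def sum_distrib_left sum_distrib_right)
  finally show "matrix_map B (matrix_map A x) r = matrix_map (\<lambda>i. matrix_map B (A i)) x r" .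
qed

definition tensor_vec :: "('i \<Rightarrow> 'k::times) \<Rightarrow> ('j \<Rightarrow> 'k) \<Rightarrow> ('i \<times> 'j \<Rightarrow> 'k)" where
  "tensor_vec x y = (\<lambda>p. x (fst p) * y (snd p))"

definition kronecker ::
  "('i \<Rightarrow> 'i \<Rightarrow> 'k::times) \<Rightarrow> ('j \<Rightarrow> 'j \<Rightarrow> 'k) \<Rightarrow> ('i \<times> 'j) \<Rightarrow> ('i \<times> 'j) \<Rightarrow> 'k" where
  "kronecker A B p = tensor_vec (A (fst p)) (B (snd p))"

lemma matrix_map_kronecker:
  fixes A :: "'i::finite \<Rightarrow> 'i \<Rightarrow> 'k::field" and B :: "'j::finite \<Rightarrow> 'j \<Rightarrow> 'k"
  shows "matrix_map (kronecker A B) (tensor_vec x y) = tensor_vec (matrix_map A x) (matrix_map B y)"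
  by (simp add: fun_eq_iff matrix_map_def kronecker_def tensor_vec_def sum_UNIV_prod sum_product mult_ac)

lemma independent_family_tensor:
  fixes v :: "'a::finite \<Rightarrow> 'i::finite \<Rightarrow> 'k::field" and w :: "'b::finite \<Rightarrow> 'j::finite \<Rightarrow> 'k"
  assumes v: "independent_family v" and w: "independent_family w"
  shows "independent_family (\<lambda>p. tensor_vec (v (fst p)) (w (snd p)))"
  unfolding independent_family_def
proof (intro allI impI)
  fix c p assume zero: "\<forall>l. (\<Sum>q\<in>UNIV. c q * tensor_vec (v (fst q)) (w (snd q)) l) = 0"
  have "(\<Sum>a\<in>UNIV. (\<Sum>b\<in>UNIV. c (a, b) * w b l2) * v a l1) = 0" for l1 l2
    using zero[rule_format, of "(l1, l2)"]
    by (simp add: tensor_vec_def sum_UNIV_prod sum_distrib_left sum_distrib_right mult_ac)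
  then have "(\<Sum>b\<in>UNIV. c (a, b) * w b l2) = 0" for a l2
    using v[unfolded independent_family_def, rule_format, of "\<lambda>a. \<Sum>b\<in>UNIV. c (a, b) * w b l2"]
    by blast
  then have "c (a, b) = 0" for a b
    using w[unfolded independent_family_def, rule_format, of "\<lambda>b. c (a, b)"] by blast
  then show "c p = 0"
    by (cases p) simp
qed

lemma diagonalisable_kronecker:
  fixes A :: "'i::finite \<Rightarrow> 'i \<Rightarrow> 'k::field" and B :: "'j::finite \<Rightarrow> 'j \<Rightarrow> 'k"
  assumes "diagonalisable (matrix_map A)" and "diagonalisable (matrix_map B)"
  shows "diagonalisable (matrix_map (kronecker A B))"
proof -
  obtain v :: "'i \<Rightarrow> 'i \<Rightarrow> 'k" and ev where v: "\<forall>a. matrix_map A (v a) = vscale (ev a) (v a)"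
    and "independent_family v"
    using assms(1) by (auto simp: diagonalisable_def independent_family_def)
  obtain w :: "'j \<Rightarrow> 'j \<Rightarrow> 'k" and ew where w: "\<forall>b. matrix_map B (w b) = vscale (ew b) (w b)"
    and "independent_family w"
    using assms(2) by (auto simp: diagonalisable_def independent_family_def)
  define u where "u p = tensor_vec (v (fst p)) (w (snd p))" for p
  define eu where "eu p = ev (fst p) * ew (snd p)" for p
  have "\<forall>p. matrix_map (kronecker A B) (u p) = vscale (eu p) (u p)"
    using v w by (simp add: u_def eu_def matrix_map_kronecker) (simp add: tensor_vec_def fun_eq_iff mult_ac)
  moreover have "independent_family u"
    unfolding u_def using independent_family_tensor \<open>independent_family v\<close> \<open>independent_family w\<close> .
  ultimately show ?thesis
    unfolding diagonalisable_def independent_family_def[symmetric]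
    using matrix_map_add matrix_map_vscale by blast
qed

definition degree_part :: "('n \<Rightarrow> 'a) \<Rightarrow> 'a \<Rightarrow> ('n \<Rightarrow> 'k::zero) \<Rightarrow> ('n \<Rightarrow> 'k)" where
  "degree_part deg d x = (\<lambda>i. if deg i = d then x i else 0)"

lemma linear_degree_part: "Vector_Spaces.linear vscale vscale (degree_part deg d :: ('n \<Rightarrow> 'k::field) \<Rightarrow> _)"
  by (auto simp: Vector_Spaces.linear_iff vec.vector_space_axioms degree_part_def fun_eq_iff)

lemma degree_part_unit_vec: "degree_part deg (deg i) (unit_vec i) = unit_vec i"
  by (simp add: degree_part_def unit_vec_def fun_eq_iff)

lemma span_degree_parts:
  fixes S :: "('n::finite \<Rightarrow> 'k::field) set" and deg :: "'n \<Rightarrow> 'a"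
  assumes "vec.span S = UNIV"
  shows "vec.span (\<Union>d. degree_part deg d ` S) = UNIV"
proof -
  have "unit_vec i \<in> vec.span (\<Union>d. degree_part deg d ` S)" for i
  proof -
    have "unit_vec i \<in> degree_part deg (deg i) ` vec.span S"
      by (rule image_eqI[where x = "unit_vec i"]) (simp_all add: degree_part_unit_vec assms)
    also have "\<dots> = vec.span (degree_part deg (deg i) ` S)"
      by (rule module_hom.span_image[OF linear_degree_part[unfolded linear_iff_module_hom], symmetric])
    also have "\<dots> \<subseteq> vec.span (\<Union>d. degree_part deg d ` S)"
      by (intro vec.span_mono) blast
    finally show ?thesis .
  qed
  then have "vec.span (range unit_vec) \<subseteq> vec.span (\<Union>d. degree_part deg d ` S)"
    by (intro vec.span_minimal) auto
  then show ?thesis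
    using fin_vec.span_Basis by auto
qed

lemma matrix_map_degree_part:
  assumes "\<And>i r. N i r \<noteq> 0 \<Longrightarrow> deg r = deg i"
  shows "matrix_map N (degree_part deg d x) = degree_part deg d (matrix_map N x)"
proof -
  have "(if deg i = d then x i else 0) * N i r = (if deg r = d then x i * N i r else 0)" for i r
    using assms[of i r] by (cases "N i r = 0") auto
  then show ?thesis
    by (simp add: matrix_map_def degree_part_def fun_eq_iff)
qed

lemma matrix_map_twist_degree_part:
  "matrix_map (\<lambda>i r. h (deg i) * N i r) (degree_part deg d x) = vscale (h d) (matrix_map N (degree_part deg d x))"
proof -
  have "(if deg i = d then x i else 0) * (h (deg i) * N i r) = h d * ((if deg i = d then x i else 0) * N i r)"
    for i r by simp
  then show ?thesis
    by (simp only: matrix_map_def degree_part_def vscale_def sum_distrib_left)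
qed

lemma diagonalisable_twist:
  fixes N :: "'n::finite \<Rightarrow> 'n \<Rightarrow> 'k::field" and deg :: "'n \<Rightarrow> 'a" and h :: "'a \<Rightarrow> 'k"
  assumes hom: "\<And>i r. N i r \<noteq> 0 \<Longrightarrow> deg r = deg i" and "diagonalisable (matrix_map N)"
  shows "diagonalisable (matrix_map (\<lambda>i r. h (deg i) * N i r))"
proof -
  let ?M = "matrix_map (\<lambda>i r. h (deg i) * N i r)"
  have "degree_part deg d x \<in> eigenvectors ?M" if "x \<in> eigenvectors (matrix_map N)" for d x
  proof -
    from that obtain \<mu> where "matrix_map N x = vscale \<mu> x"
      by (auto simp: eigenvectors_def)
    then have "?M (degree_part deg d x) = vscale (h d * \<mu>) (degree_part deg d x)"
      by (simp add: matrix_map_twist_degree_part matrix_map_degree_part[OF hom])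
        (simp add: degree_part_def fun_eq_iff)
    then show ?thesis
      by (auto simp: eigenvectors_def)
  qed
  then have "(\<Union>d. degree_part deg d ` eigenvectors (matrix_map N)) \<subseteq> eigenvectors ?M"
    by blast
  then have "vec.span (\<Union>d. degree_part deg d ` eigenvectors (matrix_map N)) \<subseteq> vec.span (eigenvectors ?M)"
    by (rule vec.span_mono)
  moreover have "vec.span (\<Union>d. degree_part deg d ` eigenvectors (matrix_map N)) = UNIV"
    using assms(2) by (intro span_degree_parts) (simp add: diagonalisable_iff_span_eigenvectors)
  ultimately have "vec.span (eigenvectors ?M) = UNIV"
    by auto
  then show ?thesis
    by (simp add: diagonalisable_iff_span_eigenvectors matrix_map_add matrix_map_vscale)
qed

section \<open>Nakayama matrices of graded forms\<close>

(* dual_map g y holds the coordinates of the functional <-, y>, so dual_map g (N i) = g i says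
   <e_i, z> = <z, matrix_map N e_i> for all z: N is the matrix of a Nakayama automorphism. *)
definition dual_map :: "('n \<Rightarrow> 'n \<Rightarrow> 'k::field) \<Rightarrow> ('n \<Rightarrow> 'k) \<Rightarrow> ('n \<Rightarrow> 'k)" where
  "dual_map g = matrix_map (\<lambda>r q. g q r)"

lemma bform_dual_map: "bform g x y = (\<Sum>q\<in>UNIV. x q * dual_map g y q)"
  by (simp add: bform_def dual_map_def matrix_map_def sum_distrib_left mult_ac)

lemma bform_matrix_map: "bform g x y = (\<Sum>q\<in>UNIV. matrix_map g x q * y q)"
proof -
  have "bform g x y = (\<Sum>q\<in>UNIV. \<Sum>i\<in>UNIV. x i * g i q * y q)"
    unfolding bform_def by (subst sum.swap) (simp add: mult_ac)
  then show ?thesis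
    by (simp add: matrix_map_def sum_distrib_right)
qed

lemma inj_dual_map:
  assumes nondeg: "\<forall>y. (\<forall>x. bform g x y = 0) \<longrightarrow> y = (\<lambda>_. 0)"
  shows "inj (dual_map g)"
proof (rule injI)
  fix y y' assume eq: "dual_map g y = dual_map g y'"
  have "dual_map g (\<lambda>i. y i - y' i) = (\<lambda>q. dual_map g y q - dual_map g y' q)"
    by (simp add: dual_map_def matrix_map_def fun_eq_iff left_diff_distrib sum_subtractf)
  then have "\<forall>x. bform g x (\<lambda>i. y i - y' i) = 0"
    by (simp add: bform_dual_map eq)
  then have "(\<lambda>i. y i - y' i) = (\<lambda>_. 0)"
    using nondeg by blast
  then show "y = y'"
    by (simp add: fun_eq_iff)
qed

lemma nakayama_matrix_exists:
  fixes g :: "'n::finite \<Rightarrow> 'n \<Rightarrow> 'k::field"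
  assumes nondeg: "\<forall>y. (\<forall>x. bform g x y = 0) \<longrightarrow> y = (\<lambda>_. 0)"
  obtains N where "\<And>i. dual_map g (N i) = g i"
proof -
  have "surj (dual_map g)"
    using fin_vec.linear_inj_imp_surj[OF linear_matrix_map[of "\<lambda>r q. g q r", folded dual_map_def]
        inj_dual_map[OF nondeg]] .
  then have "\<forall>i. \<exists>y. dual_map g y = g i"
    by (metis surjD)
  then obtain N where "\<forall>i. dual_map g (N i) = g i"
    by (rule choice[THEN exE])
  with that show ?thesis
    by blast
qed

lemma dual_map_degree_part:
  fixes deg :: "'n \<Rightarrow> 'a::ab_group_add"
  assumes supp: "\<And>a b. g a b \<noteq> 0 \<Longrightarrow> deg a + deg b + \<sigma> = 0"
  shows "dual_map g (degree_part deg d y) = degree_part deg (- d - \<sigma>) (dual_map g y)"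
proof -
  have "(if deg r = d then y r else 0) * g q r = (if deg q = - d - \<sigma> then y r * g q r else 0)" for q r
  proof (cases "g q r = 0")
    case False
    then have "deg q = - deg r - \<sigma>"
      using supp[of q r] by (simp add: add3_eq_0_iff)
    then have "deg r = d \<longleftrightarrow> deg q = - d - \<sigma>"
      by auto
    then show ?thesis
      by simp
  qed simp
  then show ?thesis
    by (simp add: dual_map_def matrix_map_def degree_part_def fun_eq_iff)
qed

lemma nakayama_matrix_degree:
  fixes deg :: "'n::finite \<Rightarrow> 'a::ab_group_add"
  assumes nondeg: "\<forall>y. (\<forall>x. bform g x y = 0) \<longrightarrow> y = (\<lambda>_. 0)"
    and N: "\<And>i. dual_map g (N i) = g i"
    and supp: "\<And>a b. g a b \<noteq> 0 \<Longrightarrow> deg a + deg b + \<sigma> = 0"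
    and "N i r \<noteq> 0"
  shows "deg r = deg i"
proof -
  have "degree_part deg (- deg i - \<sigma>) (g i) = g i"
  proof
    fix q
    show "degree_part deg (- deg i - \<sigma>) (g i) q = g i q"
      using supp[of i q] add3_eq_0_iff[of "deg q" "deg i" \<sigma>]
      by (auto simp: degree_part_def add.commute)
  qed
  then have "dual_map g (degree_part deg (deg i) (N i)) = dual_map g (N i)"
    by (simp add: dual_map_degree_part[OF supp] N)
  then have "degree_part deg (deg i) (N i) = N i"
    by (rule injD[OF inj_dual_map[OF nondeg]])
  then have "degree_part deg (deg i) (N i) r = N i r"
    by simp
  with \<open>N i r \<noteq> 0\<close> show ?thesis
    by (simp add: degree_part_def split: if_splits)
qed

lemma is_nakayama_matrix_map:
  assumes "\<And>i. dual_map g (N i) = g i"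
  shows "is_nakayama g (matrix_map N)"
  unfolding is_nakayama_def
proof (intro allI)
  fix x y
  have "dual_map g (matrix_map N x) = matrix_map g x"
    using assms by (simp add: dual_map_def matrix_map_matrix_map)
  then show "bform g x y = bform g y (matrix_map N x)"
    unfolding bform_matrix_map[of g x y] bform_dual_map[of g y] by (simp add: mult.commute)
qed

lemma bform_unit_vec: "bform g (unit_vec a) (unit_vec b) = g a b"
  by (simp add: bform_dual_map dual_map_def matrix_map_def sum_unit_vec_mult)

lemma homogeneous_unit_vec: "homogeneous deg (deg i) (unit_vec i)"
  by (simp add: homogeneous_def unit_vec_def)

lemma gram_entry_degree:
  assumes "\<forall>a a' r r'. homogeneous deg a r \<longrightarrow> homogeneous deg a' r' \<longrightarrow>
             bform g r r' \<noteq> 0 \<longrightarrow> a + a' + \<sigma> = 0"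
    and "g i j \<noteq> 0"
  shows "deg i + deg j + \<sigma> = 0"
  using assms(1)[rule_format, OF homogeneous_unit_vec homogeneous_unit_vec] assms(2)
  by (simp add: bform_unit_vec)

lemma graded_nakayama_matrix:
  fixes g :: "'n::finite \<Rightarrow> 'n \<Rightarrow> 'k::field" and deg :: "'n \<Rightarrow> 'a::ab_group_add"
  assumes frob: "frobenius_algebra m u g"
    and form: "\<forall>a a' r r'. homogeneous deg a r \<longrightarrow> homogeneous deg a' r' \<longrightarrow>
                 bform g r r' \<noteq> 0 \<longrightarrow> a + a' + \<sigma> = 0"
    and nak: "\<forall>\<nu>. is_nakayama g \<nu> \<longrightarrow> diagonalisable \<nu>"
  obtains N where "\<And>i. dual_map g (N i) = g i" and "\<And>i r. N i r \<noteq> 0 \<Longrightarrow> deg r = deg i"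
    and "\<And>h. diagonalisable (matrix_map (\<lambda>i r. h (deg i) * N i r))"
proof -
  have nondeg: "\<forall>y. (\<forall>x. bform g x y = 0) \<longrightarrow> y = (\<lambda>_. 0)"
    using frob unfolding frobenius_algebra_def by blast
  have supp: "\<And>a b. g a b \<noteq> 0 \<Longrightarrow> deg a + deg b + \<sigma> = 0"
    by (rule gram_entry_degree[OF form])
  obtain N where N: "\<And>i. dual_map g (N i) = g i"
    using nakayama_matrix_exists[OF nondeg] by blast
  have hom: "N i r \<noteq> 0 \<Longrightarrow> deg r = deg i" for i r
    using nakayama_matrix_degree[where deg = deg and \<sigma> = \<sigma>, OF nondeg N supp] .
  have "diagonalisable (matrix_map N)"
    using nak is_nakayama_matrix_map[OF N] by blast
  then have "diagonalisable (matrix_map (\<lambda>i r. h (deg i) * N i r))" for h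
    using diagonalisable_twist[of N deg h] hom by blast
  with N hom show ?thesis
    by (rule that)
qed

section \<open>The twisted tensor product\<close>

lemma bicharacter_add_left: "bicharacter t \<Longrightarrow> t (a + a') b = t a b * t a' b"
  by (simp add: bicharacter_def)

lemma bicharacter_add_right: "bicharacter t \<Longrightarrow> t a (b + b') = t a b * t a b'"
  by (simp add: bicharacter_def)

lemma bicharacter_neg_left:
  assumes "bicharacter t"
  shows "t (- a) b = inverse (t a b)"
proof -
  have "t 0 b = t 0 b * t 0 b"
    using bicharacter_add_left[OF assms, of 0 0 b] by simp
  then have "t 0 b = 1"
    using assms by (simp add: bicharacter_def)
  then have "t a b * t (- a) b = 1"
    using bicharacter_add_left[OF assms, of a "- a" b] by simp
  then show ?thesis
    by (rule inverse_unique[symmetric])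
qed

lemma bicharacter_neg_right:
  assumes "bicharacter t"
  shows "t a (- b) = inverse (t a b)"
proof -
  have "t a 0 = t a 0 * t a 0"
    using bicharacter_add_right[OF assms, of a 0 0] by simp
  then have "t a 0 = 1"
    using assms by (simp add: bicharacter_def)
  then have "t a b * t a (- b) = 1"
    using bicharacter_add_right[OF assms, of a b "- b"] by simp
  then show ?thesis
    by (rule inverse_unique[symmetric])
qed

lemma bicharacter_twist_cancel:
  assumes t: "bicharacter t" and "a + a' + \<sigma> = 0" and "b + b' + \<tau> = 0"
  shows "t a b' * t a \<tau> * inverse (t \<sigma> b) = t a' b"
proof -
  have "a' + (a + \<sigma>) = 0"
    using assms(2) by (simp add: ac_simps)
  then have a': "a' = - (a + \<sigma>)"
    by (simp only: eq_neg_iff_add_eq_0)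
  have "b' + \<tau> + b = 0"
    using assms(3) by (simp add: ac_simps)
  then have b': "b' + \<tau> = - b"
    by (simp only: eq_neg_iff_add_eq_0)
  have "t a b' * t a \<tau> = inverse (t a b)"
    by (simp only: bicharacter_add_right[OF t, symmetric] b' bicharacter_neg_right[OF t])
  moreover have "t a' b = inverse (t a b) * inverse (t \<sigma> b)"
    by (simp only: a' bicharacter_neg_left[OF t] bicharacter_add_left[OF t] inverse_mult_distrib)
  ultimately show ?thesis
    by simp
qed

lemma dual_map_twisted_gram_kronecker:
  fixes t :: "'a::ab_group_add \<Rightarrow> 'b::ab_group_add \<Rightarrow> 'k::field"
    and degR :: "'i::finite \<Rightarrow> 'a" and degS :: "'j::finite \<Rightarrow> 'b"
  assumes t: "bicharacter t"
    and NR: "\<And>i. dual_map gR (NR i) = gR i" and NR_deg: "\<And>i r. NR i r \<noteq> 0 \<Longrightarrow> degR r = degR i"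
    and gR_supp: "\<And>a b. gR a b \<noteq> 0 \<Longrightarrow> degR a + degR b + \<sigma>R = 0"
    and NS: "\<And>j. dual_map gS (NS j) = gS j"
    and gS_supp: "\<And>a b. gS a b \<noteq> 0 \<Longrightarrow> degS a + degS b + \<sigma>S = 0"
  shows "dual_map (twisted_gram t degR degS gR gS)
      (kronecker (\<lambda>i r. t (degR i) \<sigma>S * NR i r) (\<lambda>j r. inverse (t \<sigma>R (degS j)) * NS j r) p)
    = twisted_gram t degR degS gR gS p"
proof
  fix q :: "'i \<times> 'j"
  obtain i j where p: "p = (i, j)" by fastforce
  obtain q1 q2 where q: "q = (q1, q2)" by fastforce
  define A where "A r = t (degR i) \<sigma>S * NR i r" for r
  define B where "B r = inverse (t \<sigma>R (degS j)) * NS j r" for r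
  have A_row: "(\<Sum>r\<in>UNIV. A r * gR q1 r) = t (degR i) \<sigma>S * gR i q1"
    using fun_cong[OF NR[of i], of q1]
    by (simp add: A_def dual_map_def matrix_map_def mult.assoc sum_distrib_left[symmetric])
  have B_row: "(\<Sum>r\<in>UNIV. B r * gS q2 r) = inverse (t \<sigma>R (degS j)) * gS j q2"
    using fun_cong[OF NS[of j], of q2]
    by (simp add: B_def dual_map_def matrix_map_def mult.assoc sum_distrib_left[symmetric])
  have "dual_map (twisted_gram t degR degS gR gS)
      (kronecker (\<lambda>i r. t (degR i) \<sigma>S * NR i r) (\<lambda>j r. inverse (t \<sigma>R (degS j)) * NS j r) p) q
    = (\<Sum>r1\<in>UNIV. \<Sum>r2\<in>UNIV. A r1 * B r2 * (t (degR r1) (degS q2) * gR q1 r1 * gS q2 r2))"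
    by (simp add: dual_map_def matrix_map_def kronecker_def tensor_vec_def twisted_gram_def
        sum_UNIV_prod p q A_def B_def)
  also have "\<dots> = (\<Sum>r1\<in>UNIV. \<Sum>r2\<in>UNIV. t (degR i) (degS q2) * (A r1 * gR q1 r1) * (B r2 * gS q2 r2))"
  proof (intro sum.cong refl)
    fix r1 r2
    show "A r1 * B r2 * (t (degR r1) (degS q2) * gR q1 r1 * gS q2 r2)
        = t (degR i) (degS q2) * (A r1 * gR q1 r1) * (B r2 * gS q2 r2)"
      using NR_deg[of i r1] by (cases "NR i r1 = 0") (simp_all add: A_def mult_ac)
  qed
  also have "\<dots> = t (degR i) (degS q2) * ((\<Sum>r1\<in>UNIV. A r1 * gR q1 r1) * (\<Sum>r2\<in>UNIV. B r2 * gS q2 r2))"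
    unfolding sum_product by (simp only: sum_distrib_left mult.assoc)
  also have "\<dots> = t (degR i) (degS q2) * t (degR i) \<sigma>S * inverse (t \<sigma>R (degS j)) * (gR i q1 * gS j q2)"
    unfolding A_row B_row by (simp only: ac_simps)
  also have "\<dots> = twisted_gram t degR degS gR gS p q"
  proof (cases "gR i q1 = 0 \<or> gS j q2 = 0")
    case True
    then show ?thesis
      by (auto simp: twisted_gram_def p q)
  next
    case False
    then have "degR i + degR q1 + \<sigma>R = 0" and "degS j + degS q2 + \<sigma>S = 0"
      using gR_supp gS_supp by auto
    then have twist: "t (degR i) (degS q2) * t (degR i) \<sigma>S * inverse (t \<sigma>R (degS j)) = t (degR q1) (degS j)"
      by (rule bicharacter_twist_cancel[OF t])
    show ?thesis
      unfolding twist by (simp add: twisted_gram_def p q mult.assoc)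
  qed
  finally show "dual_map (twisted_gram t degR degS gR gS)
      (kronecker (\<lambda>i r. t (degR i) \<sigma>S * NR i r) (\<lambda>j r. inverse (t \<sigma>R (degS j)) * NS j r) p) q
    = twisted_gram t degR degS gR gS p q" .
qed

theorem mainTheorem7:
  fixes t :: "'a::ab_group_add \<Rightarrow> 'b::ab_group_add \<Rightarrow> 'k::field"
    and degR :: "'i::finite \<Rightarrow> 'a" and mR :: "'i \<Rightarrow> 'i \<Rightarrow> 'i \<Rightarrow> 'k"
    and uR :: "'i \<Rightarrow> 'k" and gR :: "'i \<Rightarrow> 'i \<Rightarrow> 'k"
    and degS :: "'j::finite \<Rightarrow> 'b" and mS :: "'j \<Rightarrow> 'j \<Rightarrow> 'j \<Rightarrow> 'k"
    and uS :: "'j \<Rightarrow> 'k" and gS :: "'j \<Rightarrow> 'j \<Rightarrow> 'k"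
    and \<sigma>R :: 'a and \<sigma>S :: 'b
  assumes R_frob: "frobenius_algebra mR uR gR" and R_graded: "graded_algebra degR mR"
    and S_frob: "frobenius_algebra mS uS gS" and S_graded: "graded_algebra degS mS"
    and t_bichar: "bicharacter t"
    and R_form: "\<forall>a a' r r'. homogeneous degR a r \<longrightarrow> homogeneous degR a' r' \<longrightarrow>
                   bform gR r r' \<noteq> 0 \<longrightarrow> a + a' + \<sigma>R = 0"
    and S_form: "\<forall>b b' s s'. homogeneous degS b s \<longrightarrow> homogeneous degS b' s' \<longrightarrow>
                   bform gS s s' \<noteq> 0 \<longrightarrow> b + b' + \<sigma>S = 0"
    and R_nak: "\<forall>\<nu>. is_nakayama gR \<nu> \<longrightarrow> diagonalisable \<nu>"
    and S_nak: "\<forall>\<nu>. is_nakayama gS \<nu> \<longrightarrow> diagonalisable \<nu>"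
  shows "\<exists>\<nu>. is_nakayama (twisted_gram t degR degS gR gS) \<nu> \<and> diagonalisable \<nu>"
proof -
  have gR_supp: "\<And>a b. gR a b \<noteq> 0 \<Longrightarrow> degR a + degR b + \<sigma>R = 0"
    by (rule gram_entry_degree[OF R_form])
  have gS_supp: "\<And>a b. gS a b \<noteq> 0 \<Longrightarrow> degS a + degS b + \<sigma>S = 0"
    by (rule gram_entry_degree[OF S_form])
  obtain NR where NR: "\<And>i. dual_map gR (NR i) = gR i" and NR_deg: "\<And>i r. NR i r \<noteq> 0 \<Longrightarrow> degR r = degR i"
    and NR_twist: "\<And>h. diagonalisable (matrix_map (\<lambda>i r. h (degR i) * NR i r))"
    by (rule graded_nakayama_matrix[OF R_frob R_form R_nak]) (rule that)
  obtain NS where NS: "\<And>j. dual_map gS (NS j) = gS j" and "\<And>j r. NS j r \<noteq> 0 \<Longrightarrow> degS r = degS j"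
    and NS_twist: "\<And>h. diagonalisable (matrix_map (\<lambda>j r. h (degS j) * NS j r))"
    by (rule graded_nakayama_matrix[OF S_frob S_form S_nak]) (rule that)
  let ?N = "kronecker (\<lambda>i r. t (degR i) \<sigma>S * NR i r) (\<lambda>j r. inverse (t \<sigma>R (degS j)) * NS j r)"
  have "is_nakayama (twisted_gram t degR degS gR gS) (matrix_map ?N)"
    by (intro is_nakayama_matrix_map dual_map_twisted_gram_kronecker t_bichar NR NR_deg gR_supp NS gS_supp)
  moreover have "diagonalisable (matrix_map ?N)"
    by (intro diagonalisable_kronecker NR_twist NS_twist)
  ultimately show ?thesis
    by blast
qed

end
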